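(* For integers $n>1$ and positive integers $a\neq b$, $\chi_{ld}(K_{a,b}[\overline{K_{n}}])=2$.
   Context: All graphs are finite, simple and undirected. For a graph $G=(V,E)$ of order $N$ without isolated vertices, a bijection $f\colon V\to\{1,2,\dots,N\}$ is a local distance antimagic labeling if $w(u)\neq w(v)$ for every edge $uv$, where $w(u)=\sum_{x\in N(u)}f(x)$ and $N(u)$ is the open neighborhood of $u$. $\chi_{ld}(G)$ is the minimum number of distinct weights over all local distance antimagic labelings of $G$. $K_{a,b}$ is the complete bipartite graph, $\overline{K_n}$ is the edgeless graph on $n$ vertices. The lexicographic product $G[H]$ has vertex set $V(G)\times V(H)$, with $(g,h)$ adjacent to $(g',h')$ iff $gg'\in E(G)$, or $g=g'$ and $hh'\in E(H)$. *)

theory Defs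
  imports Main
begin

type_synonym 'a graph = "'a set \<times> 'a set set"

definition verts :: "'a graph \<Rightarrow> 'a set" where "verts G = fst G"
definition edges :: "'a graph \<Rightarrow> 'a set set" where "edges G = snd G"

definition simple_graph :: "'a graph \<Rightarrow> bool" where
  "simple_graph G \<longleftrightarrow> finite (verts G) \<and>
     (\<forall>e\<in>edges G. \<exists>u v. u \<noteq> v \<and> e = {u, v} \<and> u \<in> verts G \<and> v \<in> verts G)"

definition nbhd :: "'a graph \<Rightarrow> 'a \<Rightarrow> 'a set" where
  "nbhd G u = {x \<in> verts G. {u, x} \<in> edges G}"

definition no_isolated :: "'a graph \<Rightarrow> bool" where
  "no_isolated G \<longleftrightarrow> (\<forall>u\<in>verts G. nbhd G u \<noteq> {})"

definition weight :: "'a graph \<Rightarrow> ('a \<Rightarrow> nat) \<Rightarrow> 'a \<Rightarrow> nat" where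
  "weight G f u = (\<Sum>x\<in>nbhd G u. f x)"

definition local_distance_antimagic :: "'a graph \<Rightarrow> ('a \<Rightarrow> nat) \<Rightarrow> bool" where
  "local_distance_antimagic G f \<longleftrightarrow>
     bij_betw f (verts G) {1..card (verts G)} \<and>
     (\<forall>u\<in>verts G. \<forall>v\<in>verts G. {u, v} \<in> edges G \<longrightarrow> weight G f u \<noteq> weight G f v)"

definition chi_ld :: "'a graph \<Rightarrow> nat" where
  "chi_ld G = (LEAST k. \<exists>f. local_distance_antimagic G f \<and> card (weight G f ` verts G) = k)"

definition complete_bipartite :: "nat \<Rightarrow> nat \<Rightarrow> (nat + nat) graph" where
  "complete_bipartite a b =
     (Inl ` {..<a} \<union> Inr ` {..<b}, {{Inl i, Inr j} | i j. i < a \<and> j < b})"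

definition edgeless :: "nat \<Rightarrow> nat graph" where
  "edgeless n = ({..<n}, {})"

definition lex_product :: "'a graph \<Rightarrow> 'b graph \<Rightarrow> ('a \<times> 'b) graph" where
  "lex_product G H =
     (verts G \<times> verts H,
      {{(g, h), (g', h')} | g h g' h'.
         g \<in> verts G \<and> g' \<in> verts G \<and> h \<in> verts H \<and> h' \<in> verts H \<and>
         ({g, g'} \<in> edges G \<or> (g = g' \<and> {h, h'} \<in> edges H))})"

end

theory Submission
  imports Defs "HOL-Combinatorics.Transposition"
begin

text \<open>
  The graph \<open>K\<^sub>a\<^sub>,\<^sub>b[\<overline>K\<^sub>n]\<close> is a complete bipartite graph with parts
  \<open>A\<close> and \<open>B\<close> of sizes \<open>an\<close> and \<open>bn\<close>. Every vertex of \<open>A\<close> has weight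
  \<open>f(B)\<close> and every vertex of \<open>B\<close> has weight \<open>f(A)\<close>, so a bijective labelling
  \<open>f\<close> is local distance antimagic exactly when \<open>f(A) \<noteq> f(B)\<close>, and then it has
  exactly two weights. Such a labelling exists: if \<open>f(A) = f(B)\<close>, exchanging the
  labels of one vertex of \<open>A\<close> and one vertex of \<open>B\<close> changes \<open>f(A) - f(B)\<close> by
  twice the (nonzero) difference of the two labels.
\<close>

definition complete_bipartite_parts :: "'a graph \<Rightarrow> 'a set \<Rightarrow> 'a set \<Rightarrow> bool" where
  "complete_bipartite_parts G A B \<longleftrightarrow>
     verts G = A \<union> B \<and> A \<inter> B = {} \<and> (\<forall>u\<in>A. nbhd G u = B) \<and> (\<forall>u\<in>B. nbhd G u = A)"

lemma sum_comp_transpose: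
  assumes "finite A" "x \<in> A" "y \<notin> A"
  shows "sum (f \<circ> transpose x y) A + f x = sum f A + f y"
proof -
  have "sum (f \<circ> transpose x y) (A - {x}) = sum f (A - {x})"
    using assms(3) by (intro sum.cong) (auto simp: transpose_def)
  then show ?thesis
    using sum.remove[OF assms(1,2), of f] sum.remove[OF assms(1,2), of "f \<circ> transpose x y"]
    by (simp add: algebra_simps)
qed

lemma ex_bij_betw_sums_differ:
  assumes "finite V" "A \<subseteq> V" "B \<subseteq> V" "A \<inter> B = {}" "x \<in> A" "y \<in> B"
  shows "\<exists>f. bij_betw f V {1..card V} \<and> sum f A \<noteq> sum f B"
proof -
  obtain h where "bij_betw h {1..card V} V"
    using ex_bij_betw_nat_finite_1[OF assms(1)] by blast
  then obtain f where f: "bij_betw f V {1..card V}"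
    using bij_betw_inv_into by blast
  define g where "g = f \<circ> transpose x y"
  have g: "bij_betw g V {1..card V}"
    unfolding g_def using assms(2-6) by (intro bij_betw_trans[OF _ f]) (auto simp: subset_iff)
  have "finite A" "finite B" using assms(1-3) finite_subset by auto
  then have "sum g A + f x = sum f A + f y" "sum g B + f y = sum f B + f x"
    using assms(4-6) sum_comp_transpose[of A x y f] sum_comp_transpose[of B y x f]
    by (auto simp: g_def transpose_commute)
  moreover have "f x \<noteq> f y"
    using f assms(2-6) by (metis bij_betw_iff_bijections disjoint_iff subsetD)
  ultimately have "sum f A \<noteq> sum f B \<or> sum g A \<noteq> sum g B" by linarith
  then show ?thesis using f g by blast
qed

context
  fixes G :: "'a graph" and A B :: "'a set"
  assumes parts: "complete_bipartite_parts G A B"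
begin

lemma weight_complete_bipartite_parts:
  "u \<in> A \<Longrightarrow> weight G f u = sum f B"
  "u \<in> B \<Longrightarrow> weight G f u = sum f A"
  using parts by (auto simp: complete_bipartite_parts_def weight_def)

lemma edge_complete_bipartite_parts_iff:
  assumes "u \<in> verts G" "v \<in> verts G"
  shows "{u, v} \<in> edges G \<longleftrightarrow> (u \<in> A \<and> v \<in> B) \<or> (u \<in> B \<and> v \<in> A)"
proof -
  have "{u, v} \<in> edges G \<longleftrightarrow> v \<in> nbhd G u"
    using assms(2) by (simp add: nbhd_def)
  then show ?thesis
    using parts assms(1) by (auto simp: complete_bipartite_parts_def)
qed

lemma weight_image_complete_bipartite_parts:
  assumes "A \<noteq> {}" "B \<noteq> {}"
  shows "weight G f ` verts G = {sum f A, sum f B}"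
proof -
  have "weight G f ` A = {sum f B}" "weight G f ` B = {sum f A}"
    using assms weight_complete_bipartite_parts by auto
  then show ?thesis
    using parts by (auto simp: complete_bipartite_parts_def image_Un)
qed

lemma local_distance_antimagic_complete_bipartite_parts_iff:
  assumes "A \<noteq> {}" "B \<noteq> {}"
  shows "local_distance_antimagic G f \<longleftrightarrow>
           bij_betw f (verts G) {1..card (verts G)} \<and> sum f A \<noteq> sum f B"
proof -
  have verts: "verts G = A \<union> B" using parts by (simp add: complete_bipartite_parts_def)
  have "(\<forall>u\<in>verts G. \<forall>v\<in>verts G. {u, v} \<in> edges G \<longrightarrow> weight G f u \<noteq> weight G f v)
          \<longleftrightarrow> sum f A \<noteq> sum f B" (is "?antimagic \<longleftrightarrow> _")
  proof
    assume ?antimagic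
    obtain u v where "u \<in> A" "v \<in> B" using assms by blast
    moreover have "{u, v} \<in> edges G"
      using calculation edge_complete_bipartite_parts_iff verts by blast
    ultimately show "sum f A \<noteq> sum f B"
      using \<open>?antimagic\<close> verts weight_complete_bipartite_parts by (metis UnI1 UnI2)
  next
    assume "sum f A \<noteq> sum f B"
    then show ?antimagic
      using edge_complete_bipartite_parts_iff weight_complete_bipartite_parts by metis
  qed
  then show ?thesis by (simp add: local_distance_antimagic_def)
qed

lemma chi_ld_complete_bipartite_parts:
  assumes "finite (verts G)" "A \<noteq> {}" "B \<noteq> {}"
  shows "chi_ld G = 2"
proof -
  have two_weights: "card (weight G f ` verts G) = 2" if "local_distance_antimagic G f" for f
    using that assms(2,3) local_distance_antimagic_complete_bipartite_parts_iff
    by (simp add: weight_image_complete_bipartite_parts)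
  obtain x y where "x \<in> A" "y \<in> B" using assms(2,3) by blast
  moreover have "A \<subseteq> verts G" "B \<subseteq> verts G" "A \<inter> B = {}"
    using parts by (auto simp: complete_bipartite_parts_def)
  ultimately obtain f where "local_distance_antimagic G f"
    using ex_bij_betw_sums_differ[OF assms(1)] assms(2,3)
      local_distance_antimagic_complete_bipartite_parts_iff by metis
  then show ?thesis
    unfolding chi_ld_def using two_weights by (intro Least_equality) auto
qed

end

lemma doubleton_in_edges_lex_product_iff:
  "{(g, h), (g', h')} \<in> edges (lex_product G H) \<longleftrightarrow>
     g \<in> verts G \<and> g' \<in> verts G \<and> h \<in> verts H \<and> h' \<in> verts H \<and>
     ({g, g'} \<in> edges G \<or> (g = g' \<and> {h, h'} \<in> edges H))"
  by (auto simp: lex_product_def edges_def verts_def doubleton_eq_iff insert_commute)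

lemma nbhd_lex_product:
  assumes "g \<in> verts G" "h \<in> verts H"
  shows "nbhd (lex_product G H) (g, h) = nbhd G g \<times> verts H \<union> {g} \<times> nbhd H h"
  using assms
  by (auto simp: nbhd_def doubleton_in_edges_lex_product_iff)
     (auto simp: lex_product_def verts_def)

lemma complete_bipartite_parts_lex_product:
  assumes "complete_bipartite_parts G A B" "edges H = {}"
  shows "complete_bipartite_parts (lex_product G H) (A \<times> verts H) (B \<times> verts H)"
proof -
  have "nbhd H h = {}" for h
    using assms(2) by (simp add: nbhd_def)
  then show ?thesis
    using assms(1)
    by (auto simp: complete_bipartite_parts_def nbhd_lex_product)
       (auto simp: lex_product_def verts_def)
qed

lemma complete_bipartite_parts_complete_bipartite:
  "complete_bipartite_parts (complete_bipartite a b) (Inl ` {..<a}) (Inr ` {..<b})"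
  by (auto simp: complete_bipartite_parts_def complete_bipartite_def nbhd_def verts_def edges_def
      doubleton_eq_iff)

theorem mainTheorem7:
  fixes n a b :: nat
  assumes "n > 1" and "a > 0" and "b > 0" and "a \<noteq> b"
  shows "chi_ld (lex_product (complete_bipartite a b) (edgeless n)) = 2"
proof (rule chi_ld_complete_bipartite_parts)
  show "complete_bipartite_parts (lex_product (complete_bipartite a b) (edgeless n))
          (Inl ` {..<a} \<times> {..<n}) (Inr ` {..<b} \<times> {..<n})"
    using complete_bipartite_parts_lex_product[OF complete_bipartite_parts_complete_bipartite,
        of "edgeless n" a b]
    by (simp add: edgeless_def edges_def verts_def)
  show "finite (verts (lex_product (complete_bipartite a b) (edgeless n)))"
    by (simp add: lex_product_def complete_bipartite_def edgeless_def verts_def)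
  show "Inl ` {..<a} \<times> {..<n} \<noteq> {}" "Inr ` {..<b} \<times> {..<n} \<noteq> {}"
    using assms(1-3) by auto
qed

end
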